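(* Let $d \equiv 2 \pmod 4$ be a square-free positive integer such that both equations $x^2 - dy^2 = -1$ and $x^2 - dy^2 = 6$ have solutions in integers $x, y$. Let $n = (4m+2) + 4k\sqrt{d}$ with $m, k \in \mathbb{Z}$, and suppose that $(m,k)$ satisfies neither ($m \equiv 9 \pmod{12}$ and $k \equiv 3 \pmod 6$) nor ($m \equiv 0 \pmod{12}$ and $k \equiv 0 \pmod 6$). Then there exist infinitely many $D(n)$-quadruples in $\mathbb{Z}[\sqrt{d}]$.
   Context: For $n \in \mathbb{Z}[\sqrt{d}]$, a set $\{a_1,a_2,a_3,a_4\}$ of four distinct non-zero elements of $\mathbb{Z}[\sqrt{d}]$ is called a $D(n)$-quadruple in $\mathbb{Z}[\sqrt{d}]$ if $a_ia_j + n$ is a square of an element of $\mathbb{Z}[\sqrt{d}]$ for all $1 \le i < j \le 4$. *)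

theory Defs
  imports "HOL-Computational_Algebra.Squarefree"
begin

text \<open>Elements of Z[sqrt d] are represented as pairs (a, b) of integers standing for a + b sqrt d.
  For d not a perfect square this representation is unique.\<close>

type_synonym zsqrt = "int \<times> int"

definition zs_add :: "zsqrt \<Rightarrow> zsqrt \<Rightarrow> zsqrt" where
  "zs_add x y = (fst x + fst y, snd x + snd y)"

definition zs_mul :: "int \<Rightarrow> zsqrt \<Rightarrow> zsqrt \<Rightarrow> zsqrt" where
  "zs_mul d x y = (fst x * fst y + d * snd x * snd y, fst x * snd y + snd x * fst y)"

definition zs_is_square :: "int \<Rightarrow> zsqrt \<Rightarrow> bool" where
  "zs_is_square d z \<longleftrightarrow> (\<exists>w. z = zs_mul d w w)"

definition D_quadruple :: "int \<Rightarrow> zsqrt \<Rightarrow> zsqrt set \<Rightarrow> bool" where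
  "D_quadruple d n S \<longleftrightarrow> card S = 4 \<and> (0, 0) \<notin> S \<and>
     (\<forall>a\<in>S. \<forall>b\<in>S. a \<noteq> b \<longrightarrow> zs_is_square d (zs_add (zs_mul d a b) n))"

end

theory Submission
  imports Defs "HOL-Computational_Algebra.Polynomial"
begin

text \<open>
  Identify \<open>\<int>[\<surd>d]\<close> with its image \<open>Zsqrt d\<close> in the reals; this is faithful because \<open>\<surd>d\<close> is
  irrational for \<open>d \<equiv> 2 (mod 4)\<close>. Since \<open>D(n)\<close>-quadruples multiplied by \<open>w\<close> are
  \<open>D(w\<^sup>2 n)\<close>-quadruples, an odd \<open>m\<close> is made even by dividing \<open>n\<close> by the square of a unit of norm
  \<open>-1\<close>. For even \<open>m\<close>, a solution \<open>\<alpha> = X + Y\<surd>d\<close> of norm 6 yields \<open>D, s, g, h\<close> with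
  \<open>D\<^sup>2 - s\<^sup>2 = 3n\<close> and \<open>g h = 4n - D\<^sup>2\<close>. For a unit \<open>z\<close> of norm 1 put \<open>c = h/z\<close>, \<open>e = -g z\<close>,
  \<open>b = (c + e - 2D)/4\<close> and \<open>r = (c - e)/4\<close>; then \<open>c e = D\<^sup>2 - 4n\<close>, and adding \<open>n\<close> to the
  products \<open>b(b + D)\<close>, \<open>bc\<close>, \<open>(b + D)c\<close>, \<open>be\<close>, \<open>(b + D)e\<close>, \<open>ce\<close> gives the squares of
  \<open>r\<close>, \<open>b + r\<close>, \<open>b + D + r\<close>, \<open>b - r\<close>, \<open>b + D - r\<close>, \<open>s\<close>. Congruence conditions on \<open>g, h, D\<close>
  and on \<open>z\<close> make \<open>b\<close> and \<open>r\<close> integral; there are infinitely many suitable \<open>z\<close>, and all but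
  finitely many of them give four distinct non-zero elements.
  The choice of \<open>g\<close> depends on \<open>m mod 4\<close> and the parity of \<open>k\<close>; for \<open>m \<equiv> 0 (mod 4)\<close> and
  \<open>k\<close> even it needs \<open>m\<close> and \<open>k\<close> not both divisible by 3, and the other excluded class is mapped
  to this one by the unit of norm \<open>-1\<close>.
\<close>

section \<open>The ring \<open>\<int>[\<surd>d]\<close> inside the reals\<close>

definition zs_to_real :: "int \<Rightarrow> zsqrt \<Rightarrow> real" where
  "zs_to_real d x = of_int (fst x) + of_int (snd x) * sqrt (of_int d)"

lemma zs_to_real_add: "zs_to_real d (zs_add x y) = zs_to_real d x + zs_to_real d y"
  unfolding zs_to_real_def zs_add_def by (simp add: algebra_simps)

lemma zs_to_real_mul:
  assumes "d \<ge> 0" shows "zs_to_real d (zs_mul d x y) = zs_to_real d x * zs_to_real d y"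
proof -
  have "sqrt (of_int d) * sqrt (of_int d) = of_int d" using assms by simp
  then show ?thesis unfolding zs_to_real_def zs_mul_def by (simp add: algebra_simps)
qed

lemma mult_square_eq_square_imp_zero:
  fixes d p q :: int
  assumes "d mod 4 = 2" and "d * q^2 = p^2"
  shows "q = 0"
  using assms(2)
proof (induction "nat \<bar>q\<bar>" arbitrary: p q rule: less_induct)
  case less
  show ?case
  proof (rule ccontr)
    assume "q \<noteq> 0"
    obtain d' where d: "d = 4 * d' + 2" using assms(1) by (metis mod_div_mult_eq add.commute mult.commute)
    have "p^2 = 2 * ((2 * d' + 1) * q^2)" using less.prems d by (simp add: algebra_simps)
    then have "even (p^2)" by simp
    then obtain p' where p: "p = 2 * p'" by auto
    have "(2 * d' + 1) * q^2 = 2 * p'^2" using less.prems d p by (simp add: power2_eq_square algebra_simps)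
    then have "even q" by (metis dvd_triv_left even_mult_iff even_plus_one_iff even_power)
    then obtain q' where q: "q = 2 * q'" by auto
    have "d * q'^2 = p'^2" using less.prems p q by (simp add: power2_eq_square algebra_simps)
    moreover have "nat \<bar>q'\<bar> < nat \<bar>q\<bar>" using q \<open>q \<noteq> 0\<close> by auto
    ultimately have "q' = 0" using less.hyps by blast
    then show False using q \<open>q \<noteq> 0\<close> by simp
  qed
qed

lemma inj_zs_to_real:
  assumes "d mod 4 = 2" and "d > 0"
  shows "inj (zs_to_real d)"
proof (rule injI)
  fix x y assume eq: "zs_to_real d x = zs_to_real d y"
  define a b where "a = fst x - fst y" and "b = snd y - snd x"
  have ab: "of_int b * sqrt (of_int d) = (of_int a :: real)"
    using eq unfolding zs_to_real_def a_def b_def by (simp add: algebra_simps)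
  then have "of_int (d * b^2) = (of_int (a^2) :: real)"
    using assms(2) by (metis of_int_mult of_int_power of_int_0_le_iff less_imp_le
        real_sqrt_pow2 power_mult_distrib mult.commute)
  then have "b = 0" using mult_square_eq_square_imp_zero[OF assms(1)] by (simp only: of_int_eq_iff)
  with ab show "x = y" unfolding a_def b_def by (simp add: prod_eq_iff)
qed

lemma zs_to_real_eq_0_iff:
  assumes "d mod 4 = 2" and "d > 0"
  shows "zs_to_real d x = 0 \<longleftrightarrow> x = (0, 0)"
  using injD[OF inj_zs_to_real[OF assms], of x "(0, 0)"] unfolding zs_to_real_def by auto

definition Zsqrt :: "int \<Rightarrow> real set" where
  "Zsqrt d = range (zs_to_real d)"

lemma Zsqrt_iff: "a \<in> Zsqrt d \<longleftrightarrow> (\<exists>p q. a = of_int p + of_int q * sqrt (of_int d))"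
proof
  assume "a \<in> Zsqrt d"
  then obtain x where "a = zs_to_real d x" unfolding Zsqrt_def by blast
  then show "\<exists>p q. a = of_int p + of_int q * sqrt (of_int d)" unfolding zs_to_real_def by blast
next
  assume "\<exists>p q. a = of_int p + of_int q * sqrt (of_int d)"
  then obtain p q where "a = zs_to_real d (p, q)" unfolding zs_to_real_def by auto
  then show "a \<in> Zsqrt d" unfolding Zsqrt_def by blast
qed

lemma zs_to_real_in_Zsqrt [simp, intro]: "zs_to_real d x \<in> Zsqrt d"
  unfolding Zsqrt_def by simp

lemma Zsqrt_of_int [simp, intro]: "of_int a \<in> Zsqrt d"
  unfolding Zsqrt_iff by (rule exI[of _ a], rule exI[of _ 0]) simp

lemma Zsqrt_numeral [simp, intro]: "numeral n \<in> Zsqrt d"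
  using Zsqrt_of_int[of "numeral n" d] by simp

lemma Zsqrt_0 [simp, intro]: "0 \<in> Zsqrt d" and Zsqrt_1 [simp, intro]: "1 \<in> Zsqrt d"
  using Zsqrt_of_int[of 0 d] Zsqrt_of_int[of 1 d] by simp_all

lemma Zsqrt_add [intro]: "a \<in> Zsqrt d \<Longrightarrow> b \<in> Zsqrt d \<Longrightarrow> a + b \<in> Zsqrt d"
proof -
  assume "a \<in> Zsqrt d" "b \<in> Zsqrt d"
  then obtain p q p' q' where "a = of_int p + of_int q * sqrt (of_int d)" "b = of_int p' + of_int q' * sqrt (of_int d)"
    unfolding Zsqrt_iff by blast
  then have "a + b = of_int (p + p') + of_int (q + q') * sqrt (of_int d)" by (simp add: algebra_simps)
  then show ?thesis unfolding Zsqrt_iff by blast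
qed

lemma Zsqrt_minus [intro]: "a \<in> Zsqrt d \<Longrightarrow> - a \<in> Zsqrt d"
proof -
  assume "a \<in> Zsqrt d"
  then obtain p q where "a = of_int p + of_int q * sqrt (of_int d)" unfolding Zsqrt_iff by blast
  then have "- a = of_int (- p) + of_int (- q) * sqrt (of_int d)" by simp
  then show ?thesis unfolding Zsqrt_iff by blast
qed

lemma Zsqrt_diff [intro]: "a \<in> Zsqrt d \<Longrightarrow> b \<in> Zsqrt d \<Longrightarrow> a - b \<in> Zsqrt d"
  using Zsqrt_add[of a d "- b"] Zsqrt_minus[of b d] by simp

lemma Zsqrt_mult [intro]:
  assumes "d \<ge> 0" and "a \<in> Zsqrt d" and "b \<in> Zsqrt d"
  shows "a * b \<in> Zsqrt d"
proof -
  obtain x y where "a = zs_to_real d x" "b = zs_to_real d y" using assms(2,3) unfolding Zsqrt_def by blast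
  then have "a * b = zs_to_real d (zs_mul d x y)" using zs_to_real_mul[OF assms(1)] by simp
  then show ?thesis by simp
qed

lemma zs_to_real_div_in_Zsqrt:
  assumes "c dvd a" and "c dvd b"
  shows "zs_to_real d (a, b) / of_int c \<in> Zsqrt d"
proof -
  have "zs_to_real d (a, b) / of_int c = of_int (a div c) + of_int (b div c) * sqrt (of_int d)"
    using assms unfolding zs_to_real_def by (auto simp: of_int_div add_divide_distrib)
  then show ?thesis unfolding Zsqrt_iff by blast
qed

definition real_D_quadruple :: "int \<Rightarrow> real \<Rightarrow> real set \<Rightarrow> bool" where
  "real_D_quadruple d \<nu> R \<longleftrightarrow> R \<subseteq> Zsqrt d \<and> card R = 4 \<and> 0 \<notin> R \<and>
     (\<forall>a\<in>R. \<forall>b\<in>R. a \<noteq> b \<longrightarrow> (\<exists>t\<in>Zsqrt d. a * b + \<nu> = t^2))"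

lemma D_quadruple_iff_real_D_quadruple:
  assumes "d mod 4 = 2" and "d > 0"
  shows "D_quadruple d n S \<longleftrightarrow> real_D_quadruple d (zs_to_real d n) (zs_to_real d ` S)"
proof -
  let ?f = "zs_to_real d"
  have inj: "inj ?f" using inj_zs_to_real[OF assms] .
  have mul: "?f (zs_mul d a b) = ?f a * ?f b" for a b using zs_to_real_mul assms(2) by simp
  have square: "zs_is_square d (zs_add (zs_mul d a b) n) \<longleftrightarrow> (\<exists>t\<in>Zsqrt d. ?f a * ?f b + ?f n = t^2)"
    for a b
  proof
    assume "zs_is_square d (zs_add (zs_mul d a b) n)"
    then obtain w where "zs_add (zs_mul d a b) n = zs_mul d w w" unfolding zs_is_square_def by blast
    then have "?f a * ?f b + ?f n = (?f w)^2" by (metis mul zs_to_real_add power2_eq_square)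
    then show "\<exists>t\<in>Zsqrt d. ?f a * ?f b + ?f n = t^2" by blast
  next
    assume "\<exists>t\<in>Zsqrt d. ?f a * ?f b + ?f n = t^2"
    then obtain w where "?f a * ?f b + ?f n = (?f w)^2" unfolding Zsqrt_def by blast
    then have "?f (zs_add (zs_mul d a b) n) = ?f (zs_mul d w w)"
      by (simp add: mul zs_to_real_add power2_eq_square)
    then show "zs_is_square d (zs_add (zs_mul d a b) n)"
      unfolding zs_is_square_def using injD[OF inj] by blast
  qed
  have "?f (0, 0) = 0" unfolding zs_to_real_def by simp
  then have zero: "(0, 0) \<in> S \<longleftrightarrow> 0 \<in> ?f ` S" using inj by (metis image_iff injD)
  have card: "card (?f ` S) = card S" using inj by (simp add: card_image inj_on_subset)
  have "?f ` S \<subseteq> Zsqrt d" unfolding Zsqrt_def by blast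
  then show ?thesis
    unfolding D_quadruple_def real_D_quadruple_def card zero by (simp add: square inj_eq[OF inj])
qed

lemma infinite_D_quadruples_if_real:
  assumes "d mod 4 = 2" and "d > 0"
    and "infinite {R. real_D_quadruple d (zs_to_real d n) R}"
  shows "infinite {S. D_quadruple d n S}"
proof
  let ?f = "zs_to_real d"
  assume "finite {S. D_quadruple d n S}"
  moreover have "{R. real_D_quadruple d (?f n) R} \<subseteq> (`) ?f ` {S. D_quadruple d n S}"
  proof
    fix R assume "R \<in> {R. real_D_quadruple d (?f n) R}"
    then have R: "real_D_quadruple d (?f n) R" and "R \<subseteq> range ?f"
      unfolding real_D_quadruple_def Zsqrt_def by auto
    then have "?f ` (?f -` R) = R" by blast
    moreover have "D_quadruple d n (?f -` R)"
      using R calculation D_quadruple_iff_real_D_quadruple[OF assms(1,2)] by simp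
    ultimately show "R \<in> (`) ?f ` {S. D_quadruple d n S}" by blast
  qed
  ultimately show False using assms(3) finite_subset by blast
qed

lemma real_D_quadruple_scale:
  assumes "d \<ge> 0" and "w \<in> Zsqrt d" and "w \<noteq> 0" and R: "real_D_quadruple d \<nu> R"
  shows "real_D_quadruple d (w^2 * \<nu>) ((*) w ` R)"
proof -
  have inj: "inj_on ((*) w) R" using assms(3) by (auto intro: inj_onI)
  have "\<exists>t\<in>Zsqrt d. (w * a) * (w * b) + w^2 * \<nu> = t^2" if ab: "a \<in> R" "b \<in> R" "a \<noteq> b" for a b
  proof -
    obtain t where "t \<in> Zsqrt d" and t: "a * b + \<nu> = t^2"
      using R ab unfolding real_D_quadruple_def by meson
    have "w * t \<in> Zsqrt d" using assms(1,2) \<open>t \<in> Zsqrt d\<close> by (rule Zsqrt_mult)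
    moreover have "(w * a) * (w * b) + w^2 * \<nu> = w^2 * (a * b + \<nu>)"
      by (simp add: power2_eq_square algebra_simps)
    then have "(w * a) * (w * b) + w^2 * \<nu> = (w * t)^2" by (simp add: t power_mult_distrib)
    ultimately show ?thesis by blast
  qed
  moreover have "(*) w ` R \<subseteq> Zsqrt d" using R assms(1,2) unfolding real_D_quadruple_def by blast
  moreover have "card ((*) w ` R) = 4" using R inj unfolding real_D_quadruple_def by (simp add: card_image)
  moreover have "0 \<notin> (*) w ` R" using R assms(3) unfolding real_D_quadruple_def by auto
  ultimately show ?thesis unfolding real_D_quadruple_def by (auto simp: inj_on_eq_iff[OF inj])
qed

lemma infinite_real_D_quadruples_scale:
  assumes "d \<ge> 0" and "w \<in> Zsqrt d" and "w \<noteq> 0" and "infinite {R. real_D_quadruple d \<nu> R}"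
  shows "infinite {R. real_D_quadruple d (w^2 * \<nu>) R}"
proof -
  have "inj ((*) w)" using assms(3) by (auto intro: injI)
  then have "inj_on ((`) ((*) w)) {R. real_D_quadruple d \<nu> R}" by (auto intro: inj_onI simp: inj_image_eq_iff)
  then have "infinite ((`) ((*) w) ` {R. real_D_quadruple d \<nu> R})"
    using assms(4) finite_imageD by blast
  moreover have "(`) ((*) w) ` {R. real_D_quadruple d \<nu> R} \<subseteq> {R. real_D_quadruple d (w^2 * \<nu>) R}"
    using real_D_quadruple_scale[OF assms(1-3)] by blast
  ultimately show ?thesis using finite_subset by blast
qed

section \<open>Congruences forced by the equations of norm \<open>-1\<close> and \<open>6\<close>\<close>

lemma odd_square_eq_8_mult_plus_1: "odd (a::int) \<Longrightarrow> \<exists>u. a^2 = 8 * u + 1"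
proof -
  assume "odd a"
  then obtain s where a: "a = 2 * s + 1" by (metis oddE)
  have "even (s * (s + 1))" by simp
  then obtain u where "s * (s + 1) = 2 * u" by blast
  then have "a^2 = 8 * u + 1" unfolding a by (simp add: power2_eq_square algebra_simps)
  then show ?thesis by blast
qed

lemma norm_minus_one_parity:
  fixes d x y :: int
  assumes "d mod 4 = 2" and "x^2 - d * y^2 = -1"
  shows "odd x" and "odd y" and "d mod 8 = 2"
proof -
  have "even d" using assms(1) by presburger
  then obtain d' where d: "d = 2 * d'" by blast
  have x2: "x^2 = 2 * (d' * y^2) - 1" using assms(2) unfolding d by simp
  then have "odd (x^2)" by simp
  then show "odd x" by simp
  then obtain u where u: "x^2 = 8 * u + 1" using odd_square_eq_8_mult_plus_1 by blast
  show "odd y"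
  proof
    assume "even y"
    then obtain t where "y = 2 * t" by blast
    then have "8 * (d' * t^2) = 8 * u + 2" using x2 u by (simp add: power2_eq_square algebra_simps)
    moreover have "\<forall>a b :: int. 8 * a \<noteq> 8 * b + 2" by presburger
    ultimately show False by blast
  qed
  then obtain t where "y^2 = 8 * t + 1" using odd_square_eq_8_mult_plus_1 by blast
  define c where "c = u - d * t"
  have "d = 8 * c + 2" using assms(2) u \<open>y^2 = 8 * t + 1\<close> unfolding c_def by (simp add: algebra_simps)
  then show "d mod 8 = 2" by presburger
qed

lemma norm_six_parity:
  fixes d X Y :: int
  assumes "d mod 8 = 2" and "X^2 - d * Y^2 = 6"
  shows "odd Y" and "X mod 4 = 0"
proof -
  define e where "e = d div 8"
  have d: "d = 8 * e + 2" using assms(1) unfolding e_def by presburger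
  have "X^2 = 2 * (3 + (4 * e + 1) * Y^2)" using assms(2) unfolding d by (simp add: algebra_simps)
  then have "even (X^2)" by simp
  then obtain X' where X: "X = 2 * X'" by auto
  have X': "4 * X'^2 = 6 + d * Y^2" using assms(2) unfolding X by (simp add: power2_eq_square)
  show "odd Y"
  proof
    assume "even Y"
    then obtain t where "Y = 2 * t" by blast
    then have "4 * X'^2 = 4 * (d * t^2) + 6" using X' by (simp add: power2_eq_square algebra_simps)
    moreover have "\<forall>a b :: int. 4 * a \<noteq> 4 * b + 6" by presburger
    ultimately show False by blast
  qed
  then obtain t where "Y^2 = 8 * t + 1" using odd_square_eq_8_mult_plus_1 by blast
  then have "X'^2 = 2 * (1 + 8 * e * t + e + 2 * t)" using X' unfolding d by (simp add: algebra_simps)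
  then have "even (X'^2)" by simp
  then obtain X'' where "X' = 2 * X''" by auto
  then show "X mod 4 = 0" unfolding X by simp
qed

lemma mod_3_mult_eq_0:
  fixes a b :: int
  assumes "(a * b) mod 3 = 0"
  shows "a mod 3 = 0 \<or> b mod 3 = 0"
proof -
  have "((a mod 3) * (b mod 3)) mod 3 = 0" using assms by (simp add: mod_mult_eq)
  moreover have "a mod 3 \<in> {0, 1, 2}" and "b mod 3 \<in> {0, 1, 2}" by auto
  ultimately show ?thesis by auto
qed

lemma mod_3_sign_choice:
  fixes m k a :: int
  assumes "a mod 3 \<noteq> 0" and "\<not> (m mod 3 = 0 \<and> k mod 3 = 0)"
  shows "(m - k * a) mod 3 \<noteq> 0 \<or> (m + k * a) mod 3 \<noteq> 0"
proof (rule ccontr)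
  define p where "p = k * a"
  assume "\<not> ?thesis"
  then have "(m - p) mod 3 = 0" and "(m + p) mod 3 = 0" unfolding p_def by simp_all
  then have "m mod 3 = 0" and "p mod 3 = 0" by presburger+
  then show False using mod_3_mult_eq_0[of k a] assms unfolding p_def by auto
qed

lemma norm_minus_one_norm_six_mod_3:
  fixes d x y X Y :: int
  assumes "x^2 - d * y^2 = -1" and "X^2 - d * Y^2 = 6"
  shows "d mod 3 = 1" and "3 dvd x" and "X mod 3 \<noteq> 0" and "Y mod 3 \<noteq> 0"
proof -
  have not_both: "\<not> (X mod 3 = 0 \<and> Y mod 3 = 0)"
  proof
    assume "X mod 3 = 0 \<and> Y mod 3 = 0"
    then obtain a b where "X = 3 * a" "Y = 3 * b" by (meson dvd_def mod_0_imp_dvd)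
    then have "9 * (a^2 - d * b^2) = 6" using assms(2) by (simp add: power2_eq_square algebra_simps)
    moreover have "\<forall>c :: int. 9 * c \<noteq> 6" by presburger
    ultimately show False by blast
  qed
  have reduce: "(a^2 - d * b^2) mod 3 = ((a mod 3)^2 - (d mod 3) * (b mod 3)^2) mod 3" for a b :: int
    by (intro mod_diff_cong mod_mult_cong) (simp_all add: power_mod)
  have residues: "x mod 3 \<in> {0,1,2}" "y mod 3 \<in> {0,1,2}" "d mod 3 \<in> {0,1,2}" "X mod 3 \<in> {0,1,2}"
    "Y mod 3 \<in> {0,1,2}" by auto
  have x_eq: "((x mod 3)^2 - (d mod 3) * (y mod 3)^2) mod 3 = 2"
    and X_eq: "((X mod 3)^2 - (d mod 3) * (Y mod 3)^2) mod 3 = 0"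
    unfolding reduce[symmetric] using assms by simp_all
  have x_residues: "\<forall>x\<in>{0,1,2}. \<forall>y\<in>{0,1,2}. \<forall>d\<in>{0,1,2::int}.
      (x^2 - d * y^2) mod 3 = 2 \<longrightarrow> (d = 1 \<and> x = 0) \<or> d = 2"
    by simp
  from x_residues[rule_format, OF residues(1-3) x_eq]
  have d12: "(d mod 3 = 1 \<and> x mod 3 = 0) \<or> d mod 3 = 2" .
  have X_residues: "\<forall>X\<in>{0,1,2}. \<forall>Y\<in>{0,1,2}. \<forall>d\<in>{1,2::int}.
      (X^2 - d * Y^2) mod 3 = 0 \<longrightarrow> \<not> (X = 0 \<and> Y = 0) \<longrightarrow> d = 1 \<and> X \<noteq> 0 \<and> Y \<noteq> 0"
    by simp
  have "d mod 3 \<in> {1,2}" using d12 by auto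
  from X_residues[rule_format, OF residues(4,5) this X_eq not_both]
  have "d mod 3 = 1 \<and> X mod 3 \<noteq> 0 \<and> Y mod 3 \<noteq> 0" .
  then show "d mod 3 = 1" and "3 dvd x" and "X mod 3 \<noteq> 0" and "Y mod 3 \<noteq> 0" using d12 by auto
qed

section \<open>Units of norm \<open>1\<close>\<close>

lemma norm_one_parity:
  fixes d p q :: int
  assumes "d mod 4 = 2" and "p^2 - d * q^2 = 1"
  shows "odd p" and "even q"
proof -
  have "even d" using assms(1) by presburger
  moreover have "p^2 = d * q^2 + 1" using assms(2) by simp
  ultimately have "odd (p^2)" by simp
  then show "odd p" by simp
  show "even q"
  proof (rule ccontr)
    assume "odd q"
    obtain t where t: "q^2 = 8 * t + 1" using odd_square_eq_8_mult_plus_1[OF \<open>odd q\<close>] by blast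
    obtain u where u: "p^2 = 8 * u + 1" using odd_square_eq_8_mult_plus_1[OF \<open>odd p\<close>] by blast
    have "d = 4 * (2 * (u - d * t))" using assms(2) unfolding t u by (simp add: algebra_simps)
    then have "4 dvd d" by (rule dvdI)
    then show False using assms(1) by presburger
  qed
qed

lemma norm_one_of_norm_minus_one:
  fixes d x y :: int
  assumes "d > 1" and "x^2 - d * y^2 = -1"
  shows "(x^2 + d * y^2)^2 - d * (2 * \<bar>x * y\<bar>)^2 = 1" and "x^2 + d * y^2 > 1" and "2 * \<bar>x * y\<bar> > 0"
proof -
  have "(x^2 + d * y^2)^2 - d * (2 * \<bar>x * y\<bar>)^2 = (x^2 - d * y^2)^2"
    by (simp add: power2_eq_square algebra_simps abs_mult_self_eq)
  then show "(x^2 + d * y^2)^2 - d * (2 * \<bar>x * y\<bar>)^2 = 1" using assms(2) by simp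
  have "y \<noteq> 0"
  proof
    assume "y = 0"
    then have "x^2 = -1" using assms(2) by simp
    then show False by (metis neg_0_le_iff_le not_one_le_zero zero_le_power2)
  qed
  moreover have "x \<noteq> 0"
  proof
    assume "x = 0"
    then have "d * y^2 = 1" using assms(2) by simp
    then have "d dvd 1" by (rule dvdI[OF sym])
    then show False using assms(1) by simp
  qed
  moreover have "d * y^2 > 0" using \<open>y \<noteq> 0\<close> assms(1) by simp
  moreover have "x^2 > 0" using \<open>x \<noteq> 0\<close> by simp
  ultimately show "x^2 + d * y^2 > 1" and "2 * \<bar>x * y\<bar> > 0" by (linarith, simp)
qed

lemma infinite_positive_norm_one:
  fixes d x y :: int
  assumes "d > 1" and "x^2 - d * y^2 = -1"
  shows "infinite (zs_to_real d ` {z. (fst z)^2 - d * (snd z)^2 = 1 \<and> fst z > 0 \<and> snd z > 0})"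
    (is "infinite (?f ` ?U)")
proof (rule infinite_growing)
  define \<epsilon> where "\<epsilon> = (x^2 + d * y^2, 2 * \<bar>x * y\<bar>)"
  have "fst \<epsilon> > 1" and "snd \<epsilon> > 0" and \<epsilon>: "\<epsilon> \<in> ?U"
    using norm_one_of_norm_minus_one[OF assms] unfolding \<epsilon>_def by simp_all
  then show "?f ` ?U \<noteq> {}" by blast
  have "of_int (fst \<epsilon>) > (1::real)" "of_int (snd \<epsilon>) * sqrt (of_int d) \<ge> (0::real)"
    using \<open>fst \<epsilon> > 1\<close> \<open>snd \<epsilon> > 0\<close> assms(1) by simp_all
  then have "?f \<epsilon> > 1" unfolding zs_to_real_def by linarith
  show "\<exists>z'\<in>?f ` ?U. z' > z" if z_in: "z \<in> ?f ` ?U" for z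
  proof -
    obtain u where u: "u \<in> ?U" and z: "z = ?f u" using z_in by blast
    have "(fst (zs_mul d u \<epsilon>))^2 - d * (snd (zs_mul d u \<epsilon>))^2
        = ((fst u)^2 - d * (snd u)^2) * ((fst \<epsilon>)^2 - d * (snd \<epsilon>)^2)"
      unfolding zs_mul_def by (simp add: power2_eq_square algebra_simps)
    moreover have "fst (zs_mul d u \<epsilon>) > 0" "snd (zs_mul d u \<epsilon>) > 0"
      using u \<open>fst \<epsilon> > 1\<close> \<open>snd \<epsilon> > 0\<close> assms(1) unfolding zs_mul_def by (simp_all add: add_pos_pos)
    ultimately have "zs_mul d u \<epsilon> \<in> ?U" using u \<epsilon> by simp
    moreover have "?f (zs_mul d u \<epsilon>) = z * ?f \<epsilon>" using zs_to_real_mul assms(1) z by simp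
    moreover have "z > 0" using u assms(1) unfolding z zs_to_real_def by (simp add: add_pos_nonneg)
    then have "z * ?f \<epsilon> > z" using \<open>?f \<epsilon> > 1\<close> by simp
    ultimately show ?thesis by force
  qed
qed

text \<open>For \<open>z = p + q\<surd>d\<close> of norm 1 we have \<open>1/z = p - q\<surd>d\<close>, so the two membership conditions
  below say that \<open>p\<close> is odd and \<open>q\<close> is even.\<close>

lemma infinite_units_congruent_one:
  fixes d x y :: int
  assumes "d > 0" and "d mod 4 = 2" and "x^2 - d * y^2 = -1"
  shows "infinite {z::real. z > 0 \<and> (z + 1/z - 2) / 4 \<in> Zsqrt d \<and> (z - 1/z) / 4 \<in> Zsqrt d}"
proof -
  let ?U = "{z. (fst z)^2 - d * (snd z)^2 = 1 \<and> fst z > 0 \<and> snd z > 0}"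
  have "zs_to_real d ` ?U \<subseteq> {z. z > 0 \<and> (z + 1/z - 2) / 4 \<in> Zsqrt d \<and> (z - 1/z) / 4 \<in> Zsqrt d}"
  proof
    fix z assume "z \<in> zs_to_real d ` ?U"
    then obtain p q where pq: "p^2 - d * q^2 = 1" "p > 0" "q > 0" and z: "z = of_int p + of_int q * sqrt (of_int d)"
      unfolding zs_to_real_def by auto
    have "z > 0" using pq(2,3) assms(1) unfolding z by (simp add: add_pos_nonneg)
    have "z * (of_int p - of_int q * sqrt (of_int d)) = of_int (p^2 - d * q^2)"
      using assms(1) unfolding z by (simp add: algebra_simps power2_eq_square)
    then have inv: "1 / z = of_int p - of_int q * sqrt (of_int d)"
      using pq(1) \<open>z > 0\<close> by (simp add: field_simps)
    obtain p' q' where p: "p = 2 * p' + 1" and q: "q = 2 * q'"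
      using norm_one_parity[OF assms(2) pq(1)] by (metis oddE evenE)
    have "(z + 1/z - 2) / 4 = of_int p'" and "(z - 1/z) / 4 = of_int q' * sqrt (of_int d)"
      unfolding inv unfolding z p q by (simp_all add: field_simps)
    then show "z \<in> {z. z > 0 \<and> (z + 1/z - 2) / 4 \<in> Zsqrt d \<and> (z - 1/z) / 4 \<in> Zsqrt d}"
      using \<open>z > 0\<close> zs_to_real_in_Zsqrt[of d "(0, q')"] unfolding zs_to_real_def by simp
  qed
  moreover have "d > 1" using assms(1,2) by presburger
  ultimately show ?thesis using infinite_positive_norm_one[OF _ assms(3)] infinite_super by blast
qed

section \<open>Quadruples from a generator\<close>

definition D_quadruple_generator :: "int \<Rightarrow> real \<Rightarrow> real \<Rightarrow> real \<Rightarrow> real \<Rightarrow> real \<Rightarrow> bool" where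
  "D_quadruple_generator d \<nu> D s g h \<longleftrightarrow>
     D / 2 \<in> Zsqrt d \<and> s \<in> Zsqrt d \<and> g / 2 \<in> Zsqrt d \<and> (g + h) / 4 \<in> Zsqrt d \<and>
     D^2 - s^2 = 3 * \<nu> \<and> g * h = 4 * \<nu> - D^2 \<and> D \<noteq> 0 \<and> g \<noteq> 0 \<and> h \<noteq> 0"

lemma quadruple_square_identities:
  fixes b c e r D s \<nu> :: real
  assumes "c * e = D^2 - 4 * \<nu>" and "D^2 - s^2 = 3 * \<nu>"
    and b: "b = (c + e - 2 * D) / 4" and r: "r = (c - e) / 4"
  shows "b * (b + D) + \<nu> = r^2" and "b * c + \<nu> = (b + r)^2" and "(b + D) * c + \<nu> = (b + D + r)^2"
    and "b * e + \<nu> = (b - r)^2" and "(b + D) * e + \<nu> = (b + D - r)^2" and "c * e + \<nu> = s^2"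
proof -
  have c: "c = 2 * b + D + 2 * r" and e: "e = 2 * b + D - 2 * r" using b r by simp_all
  have key: "b * (b + D) + \<nu> = r^2"
    using assms(1) unfolding c e by (simp add: algebra_simps power2_eq_square)
  then show "b * (b + D) + \<nu> = r^2" .
  show "b * c + \<nu> = (b + r)^2" "(b + D) * c + \<nu> = (b + D + r)^2"
    "b * e + \<nu> = (b - r)^2" "(b + D) * e + \<nu> = (b + D - r)^2"
    using key unfolding c e by (simp_all add: algebra_simps power2_eq_square)
  show "c * e + \<nu> = s^2" using assms(1,2) by simp
qed

lemma generator_unit_integrality:
  assumes "d \<ge> 0" and gen: "D_quadruple_generator d \<nu> D s g h" and "z \<noteq> 0"
    and P: "(z + 1/z - 2) / 4 \<in> Zsqrt d" and Q: "(z - 1/z) / 4 \<in> Zsqrt d"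
  shows "(h / z + g * z) / 4 \<in> Zsqrt d" and "(h / z - g * z - 2 * D) / 4 \<in> Zsqrt d"
proof -
  define P' Q' where "P' = (z + 1/z - 2) / 4" and "Q' = (z - 1/z) / 4"
  define G H D' where "G = g / 2" and "H = (g + h) / 4" and "D' = D / 2"
  have mem: "P' \<in> Zsqrt d" "Q' \<in> Zsqrt d" "G \<in> Zsqrt d" "H \<in> Zsqrt d" "D' \<in> Zsqrt d"
    using P Q gen unfolding P'_def Q'_def G_def H_def D'_def D_quadruple_generator_def by auto
  have "(h / z + g * z) / 4 = H * (1 + 2 * P') + Q' * (2 * G - 2 * H)"
    using \<open>z \<noteq> 0\<close> unfolding P'_def Q'_def G_def H_def by (simp add: field_simps)
  also have "\<dots> \<in> Zsqrt d" using mem assms(1) by (intro Zsqrt_add Zsqrt_mult Zsqrt_diff) auto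
  finally show "(h / z + g * z) / 4 \<in> Zsqrt d" .
  have "(h / z - g * z - 2 * D) / 4 = (H - G) * (1 + 2 * P') - 2 * Q' * H - D'"
    using \<open>z \<noteq> 0\<close> unfolding P'_def Q'_def G_def H_def D'_def by (simp add: field_simps)
  also have "\<dots> \<in> Zsqrt d" using mem assms(1) by (intro Zsqrt_add Zsqrt_mult Zsqrt_diff) auto
  finally show "(h / z - g * z - 2 * D) / 4 \<in> Zsqrt d" .
qed

lemma real_D_quadruple_of_generator:
  assumes "d \<ge> 0" and gen: "D_quadruple_generator d \<nu> D s g h" and "z \<noteq> 0"
    and P: "(z + 1/z - 2) / 4 \<in> Zsqrt d" and Q: "(z - 1/z) / 4 \<in> Zsqrt d"
    and b: "b = (h / z - g * z - 2 * D) / 4"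
    and distinct: "distinct [b + D, b, h / z, - g * z, 0]"
  shows "real_D_quadruple d \<nu> {b + D, b, h / z, - g * z}"
proof -
  define r where "r = (h / z + g * z) / 4"
  have b_in: "b \<in> Zsqrt d" and r_in: "r \<in> Zsqrt d"
    using generator_unit_integrality[OF assms(1-5)] unfolding b r_def by simp_all
  have gen': "D / 2 \<in> Zsqrt d" "s \<in> Zsqrt d" "D^2 - s^2 = 3 * \<nu>" "g * h = 4 * \<nu> - D^2"
    using gen unfolding D_quadruple_generator_def by simp_all
  have D_in: "D \<in> Zsqrt d" using Zsqrt_add[OF gen'(1) gen'(1)] by simp
  have ce: "(h / z) * (- g * z) = D^2 - 4 * \<nu>" using gen'(4) \<open>z \<noteq> 0\<close> by (simp add: field_simps)
  have b': "b = (h / z + - g * z - 2 * D) / 4" and r': "r = (h / z - - g * z) / 4"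
    unfolding b r_def by simp_all
  note sq = quadruple_square_identities[OF ce gen'(3) b' r']
  define ok where "ok x y \<longleftrightarrow> (\<exists>t\<in>Zsqrt d. x * y + \<nu> = t^2)" for x y
  have ok_sym: "ok x y \<Longrightarrow> ok y x" for x y unfolding ok_def by (simp add: mult.commute)
  have ok: "ok b (b + D)" "ok b (h / z)" "ok (b + D) (h / z)" "ok b (- g * z)" "ok (b + D) (- g * z)"
    "ok (h / z) (- g * z)"
    unfolding ok_def using sq b_in r_in D_in gen'(2) assms(1)
    by (blast intro: Zsqrt_add Zsqrt_diff)+
  have "h / z = 2 * (r + b) + D" and "- g * z = D - 2 * (r - b)" unfolding b r_def by (simp_all add: field_simps)
  then have "{b + D, b, h / z, - g * z} \<subseteq> Zsqrt d"
    using b_in D_in r_in by (auto intro!: Zsqrt_add Zsqrt_diff Zsqrt_mult[OF assms(1)])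
  moreover have "card {b + D, b, h / z, - g * z} = 4" and "0 \<notin> {b + D, b, h / z, - g * z}"
    using distinct by auto
  ultimately show ?thesis unfolding real_D_quadruple_def ok_def[symmetric] using ok ok_sym by auto
qed

lemma finite_coincidences_linear_plus_inverse:
  fixes \<alpha> \<beta> \<gamma> \<alpha>' \<beta>' \<gamma>' :: real
  assumes "(\<alpha>, \<beta>, \<gamma>) \<noteq> (\<alpha>', \<beta>', \<gamma>')"
  shows "finite {z. z \<noteq> 0 \<and> \<alpha> * z + \<beta> / z + \<gamma> = \<alpha>' * z + \<beta>' / z + \<gamma>'}"
proof -
  let ?p = "[:\<beta> - \<beta>', \<gamma> - \<gamma>', \<alpha> - \<alpha>':]"
  have "?p \<noteq> 0" using assms by auto
  moreover have "{z. z \<noteq> 0 \<and> \<alpha> * z + \<beta> / z + \<gamma> = \<alpha>' * z + \<beta>' / z + \<gamma>'} \<subseteq> {z. poly ?p z = 0}"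
    by (auto simp: field_simps)
  ultimately show ?thesis using poly_roots_finite finite_subset by blast
qed

lemma infinite_image_of_injective_choice:
  assumes "infinite A" and "inj_on f A" and "\<And>z. z \<in> A \<Longrightarrow> f z \<in> F z \<and> finite (F z)"
  shows "infinite (F ` A)"
proof
  assume "finite (F ` A)"
  then have "finite (\<Union> (F ` A))" using assms(3) by blast
  moreover have "f ` A \<subseteq> \<Union> (F ` A)" using assms(3) by blast
  ultimately show False using assms(1,2) finite_imageD finite_subset by blast
qed

lemma infinite_real_D_quadruples_of_generator:
  assumes "d \<ge> 0" and gen: "D_quadruple_generator d \<nu> D s g h"
    and units: "infinite {z::real. z > 0 \<and> (z + 1/z - 2) / 4 \<in> Zsqrt d \<and> (z - 1/z) / 4 \<in> Zsqrt d}"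
  shows "infinite {R. real_D_quadruple d \<nu> R}"
proof -
  txt \<open>The four elements and \<open>0\<close> are \<open>\<alpha> z + \<beta> / z + \<gamma>\<close> for the five distinct coefficient
    triples in \<open>ts\<close>, and two distinct triples agree at only finitely many \<open>z\<close>.\<close>
  define L :: "real \<times> real \<times> real \<Rightarrow> real \<Rightarrow> real"
    where "L t z = fst t * z + fst (snd t) / z + snd (snd t)" for t z
  define ts where "ts = [(- g / 4, h / 4, D / 2), (- g / 4, h / 4, - D / 2), (0, h, 0), (- g, 0, 0), (0, 0, 0)]"
  define b where "b z = (h / z - g * z - 2 * D) / 4" for z
  have nonzero: "D \<noteq> 0" "g \<noteq> 0" "h \<noteq> 0" using gen unfolding D_quadruple_generator_def by simp_all
  then have "distinct ts" unfolding ts_def by auto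
  have L_ts: "map (\<lambda>t. L t z) ts = [b z + D, b z, h / z, - g * z, 0]" for z
    unfolding ts_def L_def b_def by (simp add: field_simps)
  define bad where "bad = (\<Union>t\<in>set ts. \<Union>t'\<in>set ts - {t}. {z. z \<noteq> 0 \<and> L t z = L t' z})"
  have "finite bad"
    unfolding bad_def L_def by (auto intro!: finite_coincidences_linear_plus_inverse)
  define A where "A = {z::real. z > 0 \<and> (z + 1/z - 2) / 4 \<in> Zsqrt d \<and> (z - 1/z) / 4 \<in> Zsqrt d} - bad"
  have "infinite A" unfolding A_def using units \<open>finite bad\<close> by simp
  define F where "F z = {b z + D, b z, h / z, - g * z}" for z
  have "real_D_quadruple d \<nu> (F z)" if "z \<in> A" for z
  proof -
    have "inj_on (\<lambda>t. L t z) (set ts)" using that unfolding A_def bad_def by (auto intro!: inj_onI)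
    then have "distinct [b z + D, b z, h / z, - g * z, 0]"
      using \<open>distinct ts\<close> L_ts[of z] by (metis distinct_map)
    then show ?thesis unfolding F_def
      using that real_D_quadruple_of_generator[OF assms(1) gen _ _ _ b_def] unfolding A_def by simp
  qed
  moreover have "infinite (F ` A)"
  proof (rule infinite_image_of_injective_choice)
    show "inj_on (\<lambda>z. - g * z) A" using nonzero by (auto intro: inj_onI)
  qed (use \<open>infinite A\<close> in \<open>auto simp: F_def\<close>)
  ultimately show ?thesis by (metis (mono_tags) finite_subset image_subsetI mem_Collect_eq)
qed

section \<open>Generators for \<open>n = (4m + 2) + 4k\<surd>d\<close> with \<open>m\<close> even\<close>

lemma defect_times_conjugate_mod_3:
  fixes d m k X Y :: int
  assumes "d mod 3 = 1" and "X mod 3 \<noteq> 0" and "(X^2 - d * Y^2) mod 3 = 0" and "(m - k * X * Y) mod 3 \<noteq> 0"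
  defines "Dx \<equiv> (m + 1) * X - k * d * Y" and "Dy \<equiv> k * X - m * Y"
  defines "Tx \<equiv> 4 * (4 * m + 2) - (Dx^2 + d * Dy^2)" and "Ty \<equiv> 16 * k - 2 * Dx * Dy"
  shows "3 dvd Tx * X - d * Ty * Y" and "3 dvd Ty * X - Tx * Y"
proof -
  txt \<open>Hypotheses and conclusions only depend on residues mod 3, which are checked exhaustively.\<close>
  define F :: "int \<Rightarrow> int \<Rightarrow> int \<Rightarrow> int \<Rightarrow> int \<Rightarrow> int \<times> int \<times> int \<times> int" where
    "F d m k X Y = (let Dx = (m + 1) * X - k * d * Y; Dy = k * X - m * Y;
       Tx = 4 * (4 * m + 2) - (Dx * Dx + d * (Dy * Dy)); Ty = 16 * k - 2 * Dx * Dy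
     in (X * X - d * (Y * Y), m - k * X * Y, Tx * X - d * Ty * Y, Ty * X - Tx * Y))" for d m k X Y
  define red :: "int \<times> int \<times> int \<times> int \<Rightarrow> int \<times> int \<times> int \<times> int" where
    "red = map_prod (\<lambda>a. a mod 3) (map_prod (\<lambda>a. a mod 3) (map_prod (\<lambda>a. a mod 3) (\<lambda>a. a mod 3)))"
  have reduce: "red (F d m k X Y) = red (F (d mod 3) (m mod 3) (k mod 3) (X mod 3) (Y mod 3))"
    unfolding red_def F_def Let_def map_prod_simp prod.inject
    by (intro conjI mod_diff_cong mod_mult_cong mod_add_cong; simp)
  have enum: "\<forall>m\<in>{0,1,2}. \<forall>k\<in>{0,1,2}. \<forall>X\<in>{1,2}. \<forall>Y\<in>{0,1,2}.
      fst (red (F 1 m k X Y)) = 0 \<longrightarrow> fst (snd (red (F 1 m k X Y))) \<noteq> 0 \<longrightarrow>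
      snd (snd (red (F 1 m k X Y))) = (0, 0)"
    unfolding red_def F_def by simp
  from reduce have eq: "red (F d m k X Y) = red (F 1 (m mod 3) (k mod 3) (X mod 3) (Y mod 3))"
    using assms(1) by simp
  have residues: "m mod 3 \<in> {0,1,2}" "k mod 3 \<in> {0,1,2}" "X mod 3 \<in> {1,2}" "Y mod 3 \<in> {0,1,2}"
    using assms(2) by auto
  have "fst (red (F d m k X Y)) = 0" and "fst (snd (red (F d m k X Y))) \<noteq> 0"
    using assms(3,4) unfolding red_def F_def Let_def by (simp_all add: power2_eq_square)
  from enum[rule_format, OF residues this[unfolded eq]]
  have "snd (snd (red (F d m k X Y))) = (0, 0)" unfolding eq .
  then show "3 dvd Tx * X - d * Ty * Y" and "3 dvd Ty * X - Tx * Y"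
    unfolding red_def F_def Let_def Tx_def Ty_def Dx_def Dy_def by (simp_all add: power2_eq_square dvd_eq_mod_eq_0)
qed

text \<open>With \<open>\<alpha> = X + Y\<surd>d\<close> and \<open>\<nu> = (2m + 1) + 2k\<surd>d\<close>, the element \<open>D = Dx + Dy\<surd>d\<close> is
  \<open>(\<nu> \<alpha>' + \<alpha>)/2\<close> and \<open>s = (\<nu> \<alpha>' - \<alpha>)/2\<close>, where \<open>\<alpha>' = X - Y\<surd>d\<close>, so that
  \<open>D\<^sup>2 - s\<^sup>2 = 6\<nu> = 3N\<close>; \<open>T = Tx + Ty\<surd>d = 4N - D\<^sup>2\<close> is the product to be split as \<open>g h\<close>.\<close>

locale norm_six_witness =
  fixes d m k X Y :: int
  assumes d_pos: "d > 0" and d_mod_4: "d mod 4 = 2" and norm_six: "X^2 - d * Y^2 = 6"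
    and X_mod_4: "X mod 4 = 0" and Y_odd: "odd Y"
begin

definition Dx :: int where "Dx = (m + 1) * X - k * d * Y"
definition Dy :: int where "Dy = k * X - m * Y"
definition Tx :: int where "Tx = 4 * (4 * m + 2) - (Dx^2 + d * Dy^2)"
definition Ty :: int where "Ty = 16 * k - 2 * Dx * Dy"

abbreviation "N \<equiv> zs_to_real d (4 * m + 2, 4 * k)"
abbreviation "D \<equiv> zs_to_real d (Dx, Dy)"
abbreviation "T \<equiv> zs_to_real d (Tx, Ty)"

lemma D_squared: "D^2 = 4 * N - T"
  using d_pos unfolding zs_to_real_def Tx_def Ty_def
  by (simp add: power2_eq_square algebra_simps)

lemma norm_six_real: "zs_to_real d (X, Y) * zs_to_real d (X, - Y) = 6"
  using arg_cong[OF norm_six, of real_of_int] d_pos unfolding zs_to_real_def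
  by (simp add: algebra_simps power2_eq_square)

lemma D_squared_minus_s_squared:
  "D^2 - (zs_to_real d (m * X - k * d * Y, k * X - (m + 1) * Y))^2 = 3 * N"
proof -
  let ?r = "sqrt (of_int d) :: real" and ?s = "zs_to_real d (m * X - k * d * Y, k * X - (m + 1) * Y)"
  have diff: "D - ?s = of_int X + of_int Y * ?r"
    and sum: "D + ?s = (of_int X - of_int Y * ?r) * (2 * of_int m + 1 + 2 * of_int k * ?r)"
    using d_pos unfolding zs_to_real_def Dx_def Dy_def by (simp_all add: algebra_simps)
  have "D^2 - ?s^2 = (D - ?s) * (D + ?s)" by (simp add: power2_eq_square algebra_simps)
  also have "\<dots> = ((of_int X + of_int Y * ?r) * (of_int X - of_int Y * ?r)) * (2 * of_int m + 1 + 2 * of_int k * ?r)"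
    unfolding diff sum by (simp only: mult.assoc)
  also have "(of_int X + of_int Y * ?r) * (of_int X - of_int Y * ?r) = 6"
    using norm_six_real unfolding zs_to_real_def by simp
  finally show ?thesis unfolding zs_to_real_def by (simp add: algebra_simps)
qed

lemma X_multiple_4: obtains X' where "X = 4 * X'"
proof -
  have "4 dvd X" using X_mod_4 by presburger
  then show ?thesis using that by blast
qed

lemma d_eq: obtains d' where "d = 4 * d' + 2"
  using d_mod_4 that by (metis mult_div_mod_eq)

lemma generator_intro:
  fixes g :: real
  assumes "even Dx" and "even Dy" and "(Dx, Dy) \<noteq> (0, 0)" and "(Tx, Ty) \<noteq> (0, 0)"
    and "g / 2 \<in> Zsqrt d" and "g \<noteq> 0" and "(g + T / g) / 4 \<in> Zsqrt d"
  shows "\<exists>D s g h. D_quadruple_generator d N D s g h"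
proof -
  have "D / 2 \<in> Zsqrt d" using zs_to_real_div_in_Zsqrt[of 2 Dx Dy d] assms(1,2) by simp
  moreover have "D \<noteq> 0" and "T \<noteq> 0"
    using assms(3,4) zs_to_real_eq_0_iff[OF d_mod_4 d_pos] by blast+
  moreover have "g * (T / g) = 4 * N - D^2" using \<open>g \<noteq> 0\<close> D_squared by simp
  ultimately have "D_quadruple_generator d N D (zs_to_real d (m * X - k * d * Y, k * X - (m + 1) * Y)) g (T / g)"
    using assms(5-7) D_squared_minus_s_squared unfolding D_quadruple_generator_def by simp
  then show ?thesis by blast
qed

lemma generator_k_odd:
  assumes "even m" and "odd k"
  shows "\<exists>D s g h. D_quadruple_generator d N D s g h"
proof -
  obtain X' where X: "X = 4 * X'" using X_multiple_4 .
  obtain d' where d: "d = 4 * d' + 2" using d_eq .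
  have "odd (k * Y)" using \<open>odd k\<close> Y_odd by simp
  then obtain j where j: "k * Y = 2 * j + 1" by (rule oddE)
  define u where "u = (m + 1) * X' - k * d' * Y - j - 1"
  have "Dx = 4 * ((m + 1) * X' - k * d' * Y) - 2 * (k * Y)" unfolding Dx_def by (simp add: X d algebra_simps)
  then have Dx: "Dx = 4 * u + 2" unfolding j u_def by simp
  have "even Dy" unfolding Dy_def using \<open>even m\<close> by (simp add: X)
  then obtain v where Dy: "Dy = 2 * v" by blast
  have Tx: "Tx + 4 = 8 * (2 * m + 1 - 2 * u^2 - 2 * u - 2 * d' * v^2 - v^2)"
    unfolding Tx_def Dx Dy by (simp add: d power2_eq_square algebra_simps)
  have Ty: "Ty = 8 * (2 * k - 2 * u * v - v)" unfolding Ty_def Dx Dy by (simp add: algebra_simps)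
  have "(2 + T / 2) / 4 = zs_to_real d (Tx + 4, Ty) / of_int 8"
    unfolding zs_to_real_def by (simp add: field_simps)
  also have "\<dots> \<in> Zsqrt d" by (rule zs_to_real_div_in_Zsqrt) (simp_all add: Tx Ty)
  finally have "(2 + T / 2) / 4 \<in> Zsqrt d" .
  moreover have "(Tx, Ty) \<noteq> (0, 0)"
  proof
    assume "(Tx, Ty) = (0, 0)"
    then have "8 * (2 * m + 1 - 2 * u^2 - 2 * u - 2 * d' * v^2 - v^2) = 4" using Tx by simp
    moreover have "\<forall>a :: int. 8 * a \<noteq> 4" by presburger
    ultimately show False by blast
  qed
  moreover have "Dx \<noteq> 0" unfolding Dx by presburger
  ultimately show ?thesis using Dx Dy by (intro generator_intro[of 2]) auto
qed

lemma generator_m_2_mod_4: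
  assumes "m mod 4 = 2" and "even k" and T_nonzero: "(Tx, Ty) \<noteq> (0, 0)"
  shows "\<exists>D s g h. D_quadruple_generator d N D s g h"
proof -
  obtain X' where X: "X = 4 * X'" using X_multiple_4 .
  obtain d' where d: "d = 4 * d' + 2" using d_eq .
  obtain k' where k: "k = 2 * k'" using \<open>even k\<close> by blast
  obtain m' where m: "m = 4 * m' + 2" using assms(1) by (metis mult_div_mod_eq)
  obtain Y' where Y: "Y = 2 * Y' + 1" using Y_odd by (rule oddE)
  define u where "u = (m + 1) * X' - k' * (2 * d' + 1) * Y"
  define v where "v = 2 * k' * X' - 2 * m' * Y' - m' - Y' - 1"
  have Dx: "Dx = 4 * u" unfolding Dx_def u_def by (simp add: X d k algebra_simps)
  have Dy: "Dy = 4 * v + 2" unfolding Dy_def v_def by (simp add: X k m Y algebra_simps)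
  have Tx: "Tx = 16 * (m - u^2 - (4 * d' + 2) * (v^2 + v) - d')"
    unfolding Tx_def Dx Dy by (simp add: d power2_eq_square algebra_simps)
  have Ty: "Ty = 16 * (k - 2 * u * v - u)" unfolding Ty_def Dx Dy by (simp add: algebra_simps)
  have "(4 + T / 4) / 4 = zs_to_real d (Tx + 16, Ty) / of_int 16"
    unfolding zs_to_real_def by (simp add: field_simps)
  also have "\<dots> \<in> Zsqrt d" by (rule zs_to_real_div_in_Zsqrt) (simp_all add: Tx Ty)
  finally have "(4 + T / 4) / 4 \<in> Zsqrt d" .
  moreover have "Dy \<noteq> 0" unfolding Dy by presburger
  ultimately show ?thesis using Dx Dy T_nonzero by (intro generator_intro[of 4]) auto
qed

lemma D_nonzero:
  assumes "X mod 3 \<noteq> 0"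
  shows "(Dx, Dy) \<noteq> (0, 0)"
proof
  assume "(Dx, Dy) = (0, 0)"
  moreover have "X * Dx + d * Y * Dy = m * (X^2 - d * Y^2) + X^2"
    unfolding Dx_def Dy_def by (simp add: power2_eq_square algebra_simps)
  ultimately have "X * X = 3 * (- 2 * m)" using norm_six by (simp add: power2_eq_square)
  then have "(X * X) mod 3 = 0" by simp
  then show False using mod_3_mult_eq_0[of X X] assms by simp
qed

lemma defect_mod_16:
  assumes "m mod 4 = 0" and "even k"
  obtains w t where "Tx = 16 * w + 8" and "Ty = 16 * t" and "4 dvd Dx" and "4 dvd Dy"
proof -
  obtain X' where X: "X = 4 * X'" using X_multiple_4 .
  obtain d' where d: "d = 4 * d' + 2" using d_eq .
  obtain k' where k: "k = 2 * k'" using \<open>even k\<close> by blast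
  obtain m' where m: "m = 4 * m'" using assms(1) by (metis mult_div_mod_eq add_0_right)
  define u where "u = (m + 1) * X' - k' * (2 * d' + 1) * Y"
  define v where "v = 2 * k' * X' - m' * Y"
  have Dx: "Dx = 4 * u" unfolding Dx_def u_def by (simp add: X d k algebra_simps)
  have Dy: "Dy = 4 * v" unfolding Dy_def v_def by (simp add: X k m algebra_simps)
  have "Tx = 16 * (m - u^2 - d * v^2) + 8" unfolding Tx_def Dx Dy by (simp add: power2_eq_square algebra_simps)
  moreover have "Ty = 16 * (k - 2 * u * v)" unfolding Ty_def Dx Dy by (simp add: algebra_simps)
  ultimately show ?thesis by (intro that[of "m - u^2 - d * v^2" "k - 2 * u * v"]) (simp_all add: Dx Dy)
qed

lemma defect_times_conjugate_dvd_48: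
  assumes "m mod 4 = 0" and "even k" and "d mod 3 = 1" and "X mod 3 \<noteq> 0"
    and "(m - k * X * Y) mod 3 \<noteq> 0"
  shows "48 dvd 24 * X + Tx * X - d * Ty * Y" and "48 dvd 24 * Y + Ty * X - Tx * Y"
proof -
  obtain w t where Tx: "Tx = 16 * w + 8" and Ty: "Ty = 16 * t"
    using defect_mod_16[OF assms(1,2)] .
  obtain X' where X: "X = 4 * X'" using X_multiple_4 .
  have "3 dvd Tx * X - d * Ty * Y" and "3 dvd Ty * X - Tx * Y"
    using defect_times_conjugate_mod_3[OF assms(3,4) _ assms(5)] norm_six
    unfolding Tx_def Ty_def Dx_def Dy_def by simp_all
  then have "3 dvd 24 * X + Tx * X - d * Ty * Y" and "3 dvd 24 * Y + Ty * X - Tx * Y"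
    unfolding add_diff_eq[symmetric] by (auto intro!: dvd_add dvd_mult2)
  moreover have "24 * X + Tx * X - d * Ty * Y = 16 * (8 * X' + 4 * w * X' - d * t * Y)"
    and "24 * Y + Ty * X - Tx * Y = 16 * (Y + 4 * t * X' - w * Y)"
    unfolding Tx Ty by (simp_all add: X algebra_simps)
  then have "16 dvd 24 * X + Tx * X - d * Ty * Y" and "16 dvd 24 * Y + Ty * X - Tx * Y"
    by (metis dvd_triv_left)+
  moreover have "\<forall>a :: int. 3 dvd a \<longrightarrow> 16 dvd a \<longrightarrow> 48 dvd a" by presburger
  ultimately show "48 dvd 24 * X + Tx * X - d * Ty * Y" and "48 dvd 24 * Y + Ty * X - Tx * Y"
    by blast+
qed

text \<open>Here \<open>T \<equiv> 8 (mod 16)\<close>, which admits no splitting with \<open>g\<close> a rational integer. The choice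
  \<open>g = 2\<alpha>\<close>, \<open>h = T \<alpha>' / 12\<close> works when \<open>3\<close> divides \<open>T \<alpha>'\<close>; this is where the excluded
  residues of \<open>m\<close> and \<open>k\<close> come from.\<close>

lemma generator_m_0_mod_4:
  assumes "m mod 4 = 0" and "even k" and "d mod 3 = 1" and "X mod 3 \<noteq> 0"
    and "(m - k * X * Y) mod 3 \<noteq> 0"
  shows "\<exists>D s g h. D_quadruple_generator d N D s g h"
proof -
  obtain w t where Tx: "Tx = 16 * w + 8" and "4 dvd Dx" and "4 dvd Dy"
    using defect_mod_16[OF assms(1,2)] .
  define \<alpha> where "\<alpha> = zs_to_real d (X, Y)"
  have six: "\<alpha> * zs_to_real d (X, - Y) = 6" using norm_six_real unfolding \<alpha>_def .
  then have "\<alpha> \<noteq> 0" by auto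
  with six have "zs_to_real d (X, - Y) = 6 / \<alpha>" by (simp add: field_simps mult.commute)
  then have "(2 * \<alpha> + T / (2 * \<alpha>)) / 4 = (2 * \<alpha> + T * zs_to_real d (X, - Y) / 12) / 4"
    by (simp add: field_simps)
  also have "\<dots> = zs_to_real d (24 * X + Tx * X - d * Ty * Y, 24 * Y + Ty * X - Tx * Y) / of_int 48"
    using d_pos unfolding \<alpha>_def zs_to_real_def by (simp add: field_simps)
  also have "\<dots> \<in> Zsqrt d"
    using defect_times_conjugate_dvd_48[OF assms] by (rule zs_to_real_div_in_Zsqrt)
  finally have "(2 * \<alpha> + T / (2 * \<alpha>)) / 4 \<in> Zsqrt d" .
  moreover have "Tx \<noteq> 0" unfolding Tx by presburger
  ultimately show ?thesis using D_nonzero[OF assms(4)] \<open>4 dvd Dx\<close> \<open>4 dvd Dy\<close> \<open>\<alpha> \<noteq> 0\<close>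
    by (intro generator_intro[of "2 * \<alpha>"]) (auto simp: \<alpha>_def)
qed

end

lemma defect_nonzero_for_some_sign:
  fixes d m k X Y :: int
  assumes "d > 0" and "d mod 4 = 2" and "X^2 - d * Y^2 = 6" and "X mod 4 = 0" and "odd Y"
    and "X mod 3 \<noteq> 0" and "m mod 4 = 2"
  shows "(norm_six_witness.Tx d m k X Y, norm_six_witness.Ty d m k X Y) \<noteq> (0, 0) \<or>
    (norm_six_witness.Tx d m k X (- Y), norm_six_witness.Ty d m k X (- Y)) \<noteq> (0, 0)"
proof (rule ccontr)
  interpret pos: norm_six_witness d m k X Y by unfold_locales (use assms(1-5) in auto)
  interpret neg: norm_six_witness d m k X "- Y" by unfold_locales (use assms(1-5) in auto)
  assume "\<not> ?thesis"
  then have "pos.D^2 = neg.D^2" using pos.D_squared neg.D_squared by (simp add: zs_to_real_def)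
  then have "pos.D = neg.D \<or> pos.D = zs_to_real d (- neg.Dx, - neg.Dy)"
    unfolding power2_eq_iff zs_to_real_def by (simp add: algebra_simps)
  then have "(pos.Dx, pos.Dy) = (neg.Dx, neg.Dy) \<or> (pos.Dx, pos.Dy) = (- neg.Dx, - neg.Dy)"
    using injD[OF inj_zs_to_real[OF assms(2,1)]] by blast
  then show False
  proof
    assume "(pos.Dx, pos.Dy) = (neg.Dx, neg.Dy)"
    then have "m * Y = 0" unfolding pos.Dy_def neg.Dy_def by simp
    then show False using \<open>odd Y\<close> \<open>m mod 4 = 2\<close> by auto
  next
    assume "(pos.Dx, pos.Dy) = (- neg.Dx, - neg.Dy)"
    then have "(m + 1) * X = 0" unfolding pos.Dx_def neg.Dx_def by (simp add: algebra_simps)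
    then have "m + 1 = 0" using \<open>X mod 3 \<noteq> 0\<close> by auto
    with \<open>m mod 4 = 2\<close> show False by presburger
  qed
qed

lemma D_quadruple_generator_exists:
  fixes d m k X Y :: int
  assumes "d > 0" and "d mod 4 = 2" and "d mod 3 = 1"
    and "X^2 - d * Y^2 = 6" and "X mod 4 = 0" and "odd Y" and "X mod 3 \<noteq> 0" and "Y mod 3 \<noteq> 0"
    and "even m" and "\<not> (m mod 12 = 0 \<and> k mod 6 = 0)"
  shows "\<exists>D s g h. D_quadruple_generator d (zs_to_real d (4 * m + 2, 4 * k)) D s g h"
proof -
  interpret pos: norm_six_witness d m k X Y by unfold_locales (use assms(1,2,4-6) in auto)
  interpret neg: norm_six_witness d m k X "- Y" by unfold_locales (use assms(1,2,4-6) in auto)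
  have "m mod 4 = 2 \<or> m mod 4 = 0" using \<open>even m\<close> by presburger
  then consider "odd k" | "even k" "m mod 4 = 2" | "even k" "m mod 4 = 0" by blast
  then show ?thesis
  proof cases
    case 1
    then show ?thesis using pos.generator_k_odd \<open>even m\<close> by blast
  next
    case 2
    with defect_nonzero_for_some_sign[OF assms(1,2,4-7)] show ?thesis
      using pos.generator_m_2_mod_4 neg.generator_m_2_mod_4 by metis
  next
    case 3
    with assms(10) have "\<not> (m mod 3 = 0 \<and> k mod 3 = 0)" by presburger
    moreover have "(X * Y) mod 3 \<noteq> 0" using mod_3_mult_eq_0[of X Y] assms(7,8) by auto
    ultimately have "(m - k * (X * Y)) mod 3 \<noteq> 0 \<or> (m + k * (X * Y)) mod 3 \<noteq> 0"
      by (intro mod_3_sign_choice)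
    then have "(m - k * X * Y) mod 3 \<noteq> 0 \<or> (m - k * X * - Y) mod 3 \<noteq> 0" by (simp add: mult.assoc)
    then show ?thesis using pos.generator_m_0_mod_4 neg.generator_m_0_mod_4 3 assms(3,7) by blast
  qed
qed

section \<open>Odd \<open>m\<close>\<close>

lemma unit_square_shift:
  fixes d x y m k :: int
  assumes "d \<ge> 0" and unit: "x^2 - d * y^2 = -1"
  defines "m' \<equiv> 2 * m * x^2 + m + x^2 - 2 * d * k * x * y"
    and "k' \<equiv> k * (2 * x^2 + 1) - x * y * (2 * m + 1)"
  shows "(zs_to_real d (x, y))^2 * zs_to_real d (4 * m' + 2, 4 * k') = zs_to_real d (4 * m + 2, 4 * k)"
proof -
  have r: "sqrt (of_int d) * sqrt (of_int d) = (of_int d :: real)" using assms(1) by simp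
  have "zs_to_real d (x, y) * zs_to_real d (x, - y) = of_int (x^2 - d * y^2)"
    using r unfolding zs_to_real_def by (simp add: power2_eq_square algebra_simps)
  then have unit_conj: "zs_to_real d (x, y) * zs_to_real d (x, - y) = -1" using unit by simp
  have sq: "x^2 + d * y^2 = 2 * x^2 + 1" using unit by simp
  have "zs_to_real d (4 * m + 2, 4 * k) * (zs_to_real d (x, - y))^2
      = zs_to_real d ((4 * m + 2) * (x^2 + d * y^2) - 8 * d * k * x * y,
                      4 * k * (x^2 + d * y^2) - 2 * x * y * (4 * m + 2))"
    using r unfolding zs_to_real_def by (simp add: power2_eq_square algebra_simps)
  also have "\<dots> = zs_to_real d (4 * m' + 2, 4 * k')"
    unfolding sq m'_def k'_def by (simp add: algebra_simps)
  finally have "(zs_to_real d (x, y))^2 * zs_to_real d (4 * m' + 2, 4 * k')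
      = (zs_to_real d (x, y) * zs_to_real d (x, - y))^2 * zs_to_real d (4 * m + 2, 4 * k)"
    by (simp add: power2_eq_square algebra_simps)
  then show ?thesis unfolding unit_conj by simp
qed

lemma unit_square_shift_residues:
  fixes d x y m k :: int
  assumes "even d" and "odd x" and "odd y" and "3 dvd x"
    and "odd m" and excluded: "\<not> (m mod 12 = 9 \<and> k mod 6 = 3)"
  defines "m' \<equiv> 2 * m * x^2 + m + x^2 - 2 * d * k * x * y"
    and "k' \<equiv> k * (2 * x^2 + 1) - x * y * (2 * m + 1)"
  shows "even m'" and "\<not> (m' mod 12 = 0 \<and> k' mod 6 = 0)"
proof -
  show "even m'" unfolding m'_def using \<open>odd m\<close> \<open>odd x\<close> by simp
  obtain u where u: "x^2 = 8 * u + 1" using odd_square_eq_8_mult_plus_1[OF \<open>odd x\<close>] by blast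
  obtain d' where d: "d = 2 * d'" using \<open>even d\<close> by blast
  obtain x' where x: "x = 3 * x'" using \<open>3 dvd x\<close> by blast
  have "m' - 3 * m - 1 = 4 * (4 * m * u + 2 * u - d' * k * x * y)"
    unfolding m'_def u d by (simp add: algebra_simps)
  moreover have "m' - m = 3 * (x' * (2 * m * x + x - 2 * d * k * y))"
    unfolding m'_def x by (simp add: power2_eq_square algebra_simps)
  moreover have "k' - k = 3 * (x' * (2 * k * x - y * (2 * m + 1)))"
    unfolding k'_def x by (simp add: power2_eq_square algebra_simps)
  moreover have "odd (x * y * (2 * m + 1))" using \<open>odd x\<close> \<open>odd y\<close> by simp
  then have "even (k' - k - 1)" unfolding k'_def by simp
  ultimately show "\<not> (m' mod 12 = 0 \<and> k' mod 6 = 0)" using \<open>odd m\<close> excluded by presburger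
qed

lemma infinite_real_D_quadruples_even:
  fixes d x y X Y m k :: int
  assumes "d > 0" and "d mod 4 = 2" and unit: "x^2 - d * y^2 = -1" and six: "X^2 - d * Y^2 = 6"
    and "even m" and "\<not> (m mod 12 = 0 \<and> k mod 6 = 0)"
  shows "infinite {R. real_D_quadruple d (zs_to_real d (4 * m + 2, 4 * k)) R}"
proof -
  have "d mod 8 = 2" using norm_minus_one_parity[OF assms(2) unit] by simp
  note parity = norm_six_parity[OF this six]
  note mod_3 = norm_minus_one_norm_six_mod_3[OF unit six]
  obtain D s g h where "D_quadruple_generator d (zs_to_real d (4 * m + 2, 4 * k)) D s g h"
    using D_quadruple_generator_exists[OF assms(1,2) mod_3(1) six parity(2,1) mod_3(3,4) assms(5,6)]
    by blast
  then show ?thesis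
    using infinite_real_D_quadruples_of_generator infinite_units_congruent_one[OF assms(1-3)] assms(1) by simp
qed

lemma infinite_real_D_quadruples:
  fixes d x y X Y m k :: int
  assumes "d > 0" and "d mod 4 = 2" and unit: "x^2 - d * y^2 = -1" and six: "X^2 - d * Y^2 = 6"
    and "\<not> (m mod 12 = 9 \<and> k mod 6 = 3)" and "\<not> (m mod 12 = 0 \<and> k mod 6 = 0)"
  shows "infinite {R. real_D_quadruple d (zs_to_real d (4 * m + 2, 4 * k)) R}"
proof (cases "even m")
  case True
  then show ?thesis using infinite_real_D_quadruples_even[OF assms(1,2) unit six _ assms(6)] by blast
next
  case False
  define m' k' where "m' = 2 * m * x^2 + m + x^2 - 2 * d * k * x * y"
    and "k' = k * (2 * x^2 + 1) - x * y * (2 * m + 1)"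
  have "odd x" and "odd y" using norm_minus_one_parity[OF assms(2) unit] by simp_all
  moreover have "3 dvd x" using norm_minus_one_norm_six_mod_3[OF unit six] by simp
  moreover have "even d" using assms(2) by presburger
  ultimately have "even m'" and "\<not> (m' mod 12 = 0 \<and> k' mod 6 = 0)"
    using unit_square_shift_residues[OF _ _ _ _ False assms(5)] unfolding m'_def k'_def by simp_all
  from infinite_real_D_quadruples_even[OF assms(1,2) unit six this]
  have "infinite {R. real_D_quadruple d (zs_to_real d (4 * m' + 2, 4 * k')) R}" .
  moreover have "zs_to_real d (x, y) \<noteq> 0" using zs_to_real_eq_0_iff[OF assms(2,1)] \<open>odd x\<close> by auto
  moreover have shift: "(zs_to_real d (x, y))^2 * zs_to_real d (4 * m' + 2, 4 * k') = zs_to_real d (4 * m + 2, 4 * k)"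
    using unit_square_shift[OF _ unit, of m k] assms(1) unfolding m'_def k'_def by simp
  ultimately show ?thesis
    using infinite_real_D_quadruples_scale[of d "zs_to_real d (x, y)"] assms(1) unfolding shift[symmetric] by simp
qed

theorem theorem1p3:
  fixes d m k :: int
  assumes "d > 0" and "squarefree d" and "d mod 4 = 2"
    and "\<exists>x y :: int. x^2 - d * y^2 = -1"
    and "\<exists>x y :: int. x^2 - d * y^2 = 6"
    and "\<not> (m mod 12 = 9 \<and> k mod 6 = 3)"
    and "\<not> (m mod 12 = 0 \<and> k mod 6 = 0)"
  shows "infinite {S. D_quadruple d (4 * m + 2, 4 * k) S}"
proof -
  obtain x y where unit: "x^2 - d * y^2 = -1" using assms(4) by blast
  obtain X Y where six: "X^2 - d * Y^2 = 6" using assms(5) by blast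
  show ?thesis
    using infinite_D_quadruples_if_real[OF assms(3,1) infinite_real_D_quadruples[OF assms(1,3) unit six assms(6,7)]] .
qed

end
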